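(* Let $N\ge 4$ and $M\ge 1$ be integers, let $\mathcal I_N=\{(i,j): i,j\in\{1,\dots,N\},\ i\neq j\}$, and for each dyad $(i,j)\in\mathcal I_N$ let $Y_{ij}\in\{0,1,\dots,M\}$ be an ordered outcome and $X_{ij}\in\mathbb R^k$ a covariate vector. Suppose that, conditional on all covariates $\mathbf X=(X_{ij})_{(i,j)\in\mathcal I_N}$ and all fixed effects $\mathbf F$ (consisting of real numbers $\lambda_{im},\delta_{im}$ for $i=1,\dots,N$, $m=1,\dots,M$), the outcomes $Y_{ij}$ are independent across dyads with \[ P(Y_{ij}=m\mid X_{ij},F_i,F_j)=\begin{cases}1-\Lambda(X_{ij}'\beta_0-\lambda_{i1}-\delta_{j1}), & m=0,\\ \Lambda(X_{ij}'\beta_0-\lambda_{im}-\delta_{jm})-\Lambda(X_{ij}'\beta_0-\lambda_{i,m+1}-\delta_{j,m+1}), & 1\le m\le M-1,\\ \Lambda(X_{ij}'\beta_0-\lambda_{iM}-\delta_{jM}), & m=M,\end{cases} \] where $\Lambda(z)=e^z/(1+e^z)$ and $\beta_0\in\mathbb R^k$. For $m\in\{1,\dots,M\}$ let $D_{ij}(m)=\mathbf 1\{Y_{ij}\ge m\}$. For a tetrad $\sigma=(i_1,i_2,j_1,j_2)$ of four distinct nodes, define \[ \overline Z_\sigma(m)=\tfrac12\Big((D_{i_1j_1}(m)-D_{i_1j_2}(m))-(D_{i_2j_1}(m)-D_{i_2j_2}(m))\Big), \] $X_\sigma=(X_{i_1j_1},X_{i_1j_2},X_{i_2j_1},X_{i_2j_2})$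 and $r_\sigma=(X_{i_1j_1}-X_{i_1j_2})-(X_{i_2j_1}-X_{i_2j_2})$. Then for any tetrad $\sigma$ and any cutoff $m\in\{1,\dots,M\}$, \[ P\big(\overline Z_\sigma(m)=1\mid \overline Z_\sigma(m)\in\{-1,+1\},X_\sigma\big)=\Lambda(r_\sigma'\beta_0). \]
   Context: The thresholds are assumed ordered in the sense that $\lambda_{im'}+\delta_{jm'}\ge \lambda_{im}+\delta_{jm}$ whenever $m'\ge m$, so that the displayed probabilities are valid. $F_i=((\lambda_{im},\delta_{im}):m=1,\dots,M)$ collects the fixed effects of node $i$ (sender effects $\lambda_{im}$ and receiver effects $\delta_{im}$). *)

theory Defs
  imports "HOL-Probability.Probability"
begin

definition logistic :: "real \<Rightarrow> real" where
  "logistic z = exp z / (1 + exp z)"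

text \<open>Ordered-logit probability of outcome m for dyad (i,j), given index c = X_ij'beta0,
  sender effects lam i m and receiver effects del j m, with M cutoffs.\<close>
definition ologit_prob ::
  "nat \<Rightarrow> real \<Rightarrow> (nat \<Rightarrow> nat \<Rightarrow> real) \<Rightarrow> (nat \<Rightarrow> nat \<Rightarrow> real) \<Rightarrow> nat \<Rightarrow> nat \<Rightarrow> nat \<Rightarrow> real" where
  "ologit_prob M c lam del i j m =
     (if m = 0 then 1 - logistic (c - lam i 1 - del j 1)
      else if m = M then logistic (c - lam i M - del j M)
      else logistic (c - lam i m - del j m) - logistic (c - lam i (m+1) - del j (m+1)))"

definition dyads :: "nat \<Rightarrow> (nat \<times> nat) set" where
  "dyads N = {(i,j). i \<in> {1..N} \<and> j \<in> {1..N} \<and> i \<noteq> j}"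

definition Dind :: "(nat \<Rightarrow> nat \<Rightarrow> 'w \<Rightarrow> nat) \<Rightarrow> nat \<Rightarrow> nat \<Rightarrow> nat \<Rightarrow> 'w \<Rightarrow> real" where
  "Dind Y i j m \<omega> = (if Y i j \<omega> \<ge> m then 1 else 0)"

definition Zbar :: "(nat \<Rightarrow> nat \<Rightarrow> 'w \<Rightarrow> nat) \<Rightarrow> nat \<Rightarrow> nat \<Rightarrow> nat \<Rightarrow> nat \<Rightarrow> nat \<Rightarrow> 'w \<Rightarrow> real" where
  "Zbar Y i1 i2 j1 j2 m \<omega> =
     (1/2) * ((Dind Y i1 j1 m \<omega> - Dind Y i1 j2 m \<omega>) - (Dind Y i2 j1 m \<omega> - Dind Y i2 j2 m \<omega>))"

end

theory Submission imports Defs begin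

text \<open>Conditioning on \<open>Zbar \<in> {-1, 1}\<close> leaves exactly two configurations of the four cutoff
  indicators, \<open>(1,0,0,1)\<close> and \<open>(0,1,1,0)\<close>. By independence across dyads each has
  probability a product of four logistic terms, and in the ratio of the two products the
  normalisers \<open>1 + exp z\<close> cancel, as do the fixed effects, which enter the four indices
  with signs \<open>+ - - +\<close>. What remains is the logistic function of the tetrad difference of
  the covariate indices.\<close>

lemma one_minus_logistic: "1 - logistic x = 1 / (1 + exp x)"
proof -
  have "1 + exp x \<noteq> 0" using exp_gt_zero[of x] by linarith
  then show ?thesis unfolding logistic_def by (simp add: divide_simps)
qed

lemma logistic_ratio: "exp u / (exp u + exp v) = logistic (u - v)"
  unfolding logistic_def exp_diff by (simp add: field_simps add_pos_pos)

lemma logistic_tetrad: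
  "logistic a * (1 - logistic b) * (1 - logistic c) * logistic d /
   (logistic a * (1 - logistic b) * (1 - logistic c) * logistic d +
    (1 - logistic a) * logistic b * logistic c * (1 - logistic d)) = logistic (a - b - c + d)"
proof -
  define D where "D = (1 + exp a) * (1 + exp b) * (1 + exp c) * (1 + exp d)"
  have "D > 0" unfolding D_def by (simp add: add_pos_pos)
  have num: "logistic a * (1 - logistic b) * (1 - logistic c) * logistic d = exp (a + d) / D"
    unfolding one_minus_logistic unfolding logistic_def D_def exp_add by simp
  have alt: "(1 - logistic a) * logistic b * logistic c * (1 - logistic d) = exp (b + c) / D"
    unfolding one_minus_logistic unfolding logistic_def D_def exp_add by simp
  have "exp (a + d) / D / (exp (a + d) / D + exp (b + c) / D)
        = exp (a + d) / (exp (a + d) + exp (b + c))"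
    using \<open>D > 0\<close> by (simp add: add_divide_distrib[symmetric])
  also have "\<dots> = logistic (a - b - c + d)"
    by (simp add: logistic_ratio algebra_simps)
  finally show ?thesis unfolding num alt .
qed

lemma (in prob_space) prob_ge_telescoping:
  fixes Y :: "'a \<Rightarrow> nat"
  assumes rv: "Y \<in> measurable M (count_space UNIV)"
    and bounded: "\<forall>\<omega>\<in>space M. Y \<omega> \<le> n"
    and top: "prob {\<omega>\<in>space M. Y \<omega> = n} = L n"
    and point_mass: "\<And>k. i \<le> k \<Longrightarrow> k < n \<Longrightarrow> prob {\<omega>\<in>space M. Y \<omega> = k} = L k - L (Suc k)"
    and "i \<le> n"
  shows "prob {\<omega>\<in>space M. i \<le> Y \<omega>} = L i"
  using \<open>i \<le> n\<close>
proof (induction i rule: inc_induct)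
  case base
  have "{\<omega>\<in>space M. n \<le> Y \<omega>} = {\<omega>\<in>space M. Y \<omega> = n}"
    using bounded by force
  then show ?case using top by simp
next
  case (step k)
  have "{\<omega>\<in>space M. k \<le> Y \<omega>} = {\<omega>\<in>space M. Y \<omega> = k} \<union> {\<omega>\<in>space M. Suc k \<le> Y \<omega>}"
    by auto
  moreover have "{\<omega>\<in>space M. Y \<omega> = k} \<in> events" "{\<omega>\<in>space M. Suc k \<le> Y \<omega>} \<in> events"
    using rv by measurable
  ultimately have "prob {\<omega>\<in>space M. k \<le> Y \<omega>}
             = prob {\<omega>\<in>space M. Y \<omega> = k} + prob {\<omega>\<in>space M. Suc k \<le> Y \<omega>}"
    by (auto intro: finite_measure_Union)
  then show ?case using step.IH point_mass[OF \<open>i \<le> k\<close> \<open>k < n\<close>] by simp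
qed

lemma (in prob_space) ologit_prob_ge:
  assumes "Y \<in> measurable M (count_space UNIV)"
    and "\<forall>\<omega>\<in>space M. Y \<omega> \<le> K"
    and law: "\<forall>k\<in>{0..K}. prob {\<omega>\<in>space M. Y \<omega> = k} = ologit_prob K c lam del i j k"
    and "1 \<le> m" "m \<le> K"
  shows "prob {\<omega>\<in>space M. m \<le> Y \<omega>} = logistic (c - lam i m - del j m)"
  using assms(1,2) by (rule prob_ge_telescoping) (use law assms(4,5) in \<open>auto simp: ologit_prob_def\<close>)

lemma (in prob_space) indep_vars_prob_conj4:
  assumes indep: "indep_vars (\<lambda>_. count_space UNIV) X I"
    and "{a, b, c, d} \<subseteq> I" and "distinct [a, b, c, d]"
  shows "prob {\<omega>\<in>space M. P (X a \<omega>) \<and> Q (X b \<omega>) \<and> R (X c \<omega>) \<and> S (X d \<omega>)}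
       = prob {\<omega>\<in>space M. P (X a \<omega>)} * prob {\<omega>\<in>space M. Q (X b \<omega>)}
         * prob {\<omega>\<in>space M. R (X c \<omega>)} * prob {\<omega>\<in>space M. S (X d \<omega>)}"
proof -
  have ne: "a \<noteq> b" "a \<noteq> c" "a \<noteq> d" "b \<noteq> c" "b \<noteq> d" "c \<noteq> d"
    using assms(3) by auto
  define A where "A i = (if i = a then Collect P else if i = b then Collect Q
                         else if i = c then Collect R else Collect S)" for i
  have "prob (\<Inter>i\<in>{a, b, c, d}. X i -` A i \<inter> space M)
        = (\<Prod>i\<in>{a, b, c, d}. prob (X i -` A i \<inter> space M))"
    using assms by (intro indep_varsD[OF indep]) auto
  also have "(\<Inter>i\<in>{a, b, c, d}. X i -` A i \<inter> space M)
      = {\<omega>\<in>space M. P (X a \<omega>) \<and> Q (X b \<omega>) \<and> R (X c \<omega>) \<and> S (X d \<omega>)}"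
    using ne by (auto simp: A_def)
  finally show ?thesis
    using ne by (simp add: A_def mult.assoc Int_def conj_commute)
qed

lemma (in prob_space) cond_prob_exclusive_alternatives:
  assumes "{\<omega>\<in>space M. P \<omega>} \<in> events" "{\<omega>\<in>space M. R \<omega>} \<in> events"
    and "\<And>\<omega>. \<omega> \<in> space M \<Longrightarrow> Q \<omega> \<longleftrightarrow> P \<omega> \<or> R \<omega>"
    and "\<And>\<omega>. \<omega> \<in> space M \<Longrightarrow> \<not> (P \<omega> \<and> R \<omega>)"
  shows "cond_prob M P Q
       = prob {\<omega>\<in>space M. P \<omega>} / (prob {\<omega>\<in>space M. P \<omega>} + prob {\<omega>\<in>space M. R \<omega>})"
proof -
  have "{\<omega>\<in>space M. P \<omega> \<and> Q \<omega>} = {\<omega>\<in>space M. P \<omega>}"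
    using assms(3) by auto
  moreover have "{\<omega>\<in>space M. Q \<omega>} = {\<omega>\<in>space M. P \<omega>} \<union> {\<omega>\<in>space M. R \<omega>}"
    using assms(3) by auto
  moreover have "prob ({\<omega>\<in>space M. P \<omega>} \<union> {\<omega>\<in>space M. R \<omega>})
                 = prob {\<omega>\<in>space M. P \<omega>} + prob {\<omega>\<in>space M. R \<omega>}"
    using assms(1,2,4) by (intro finite_measure_Union) auto
  ultimately show ?thesis
    unfolding cond_prob_def by simp
qed

lemma Zbar_eq_1_iff:
  "Zbar Y i1 i2 j1 j2 m \<omega> = 1 \<longleftrightarrow>
     m \<le> Y i1 j1 \<omega> \<and> \<not> m \<le> Y i1 j2 \<omega> \<and> \<not> m \<le> Y i2 j1 \<omega> \<and> m \<le> Y i2 j2 \<omega>"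
  unfolding Zbar_def Dind_def by (auto split: if_splits)

lemma Zbar_eq_minus_1_iff:
  "Zbar Y i1 i2 j1 j2 m \<omega> = -1 \<longleftrightarrow>
     \<not> m \<le> Y i1 j1 \<omega> \<and> m \<le> Y i1 j2 \<omega> \<and> m \<le> Y i2 j1 \<omega> \<and> \<not> m \<le> Y i2 j2 \<omega>"
  unfolding Zbar_def Dind_def by (auto split: if_splits)

lemma (in prob_space) prob_Zbar_eq_plus_minus_1:
  fixes Y :: "nat \<Rightarrow> nat \<Rightarrow> 'a \<Rightarrow> nat"
  assumes indep: "indep_vars (\<lambda>_. count_space UNIV) (\<lambda>(i, j). Y i j) I"
    and dyads: "{(i1, j1), (i1, j2), (i2, j1), (i2, j2)} \<subseteq> I" and "i1 \<noteq> i2" "j1 \<noteq> j2"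
    and cut: "\<And>i j. (i, j) \<in> I \<Longrightarrow> prob {\<omega>\<in>space M. m \<le> Y i j \<omega>} = p i j"
  shows "prob {\<omega>\<in>space M. Zbar Y i1 i2 j1 j2 m \<omega> = 1}
           = p i1 j1 * (1 - p i1 j2) * (1 - p i2 j1) * p i2 j2"
    and "prob {\<omega>\<in>space M. Zbar Y i1 i2 j1 j2 m \<omega> = -1}
           = (1 - p i1 j1) * p i1 j2 * p i2 j1 * (1 - p i2 j2)"
proof -
  have uncut: "prob {\<omega>\<in>space M. \<not> m \<le> Y i j \<omega>} = 1 - p i j" if "(i, j) \<in> I" for i j
  proof -
    have "Y i j \<in> measurable M (count_space UNIV)"
      using indep that unfolding indep_vars_def by auto
    then have "{\<omega>\<in>space M. m \<le> Y i j \<omega>} \<in> events"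
      by measurable
    then show ?thesis
      using prob_neg cut[OF that] by simp
  qed
  have "distinct [(i1, j1), (i1, j2), (i2, j1), (i2, j2)]"
    using assms(3,4) by auto
  note pattern = indep_vars_prob_conj4[OF indep dyads this, simplified]
  show "prob {\<omega>\<in>space M. Zbar Y i1 i2 j1 j2 m \<omega> = 1}
          = p i1 j1 * (1 - p i1 j2) * (1 - p i2 j1) * p i2 j2"
    unfolding Zbar_eq_1_iff
    using pattern[of "\<lambda>y. m \<le> y" "\<lambda>y. \<not> m \<le> y" "\<lambda>y. \<not> m \<le> y" "\<lambda>y. m \<le> y"]
      dyads cut uncut by simp
  show "prob {\<omega>\<in>space M. Zbar Y i1 i2 j1 j2 m \<omega> = -1}
          = (1 - p i1 j1) * p i1 j2 * p i2 j1 * (1 - p i2 j2)"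
    unfolding Zbar_eq_minus_1_iff
    using pattern[of "\<lambda>y. \<not> m \<le> y" "\<lambda>y. m \<le> y" "\<lambda>y. m \<le> y" "\<lambda>y. \<not> m \<le> y"]
      dyads cut uncut by simp
qed

lemma (in prob_space) cond_prob_Zbar_eq_1:
  fixes Y :: "nat \<Rightarrow> nat \<Rightarrow> 'a \<Rightarrow> nat"
  assumes indep: "indep_vars (\<lambda>_. count_space UNIV) (\<lambda>(i, j). Y i j) I"
    and dyads: "{(i1, j1), (i1, j2), (i2, j1), (i2, j2)} \<subseteq> I" and "i1 \<noteq> i2" "j1 \<noteq> j2"
    and "\<And>i j. (i, j) \<in> I \<Longrightarrow> prob {\<omega>\<in>space M. m \<le> Y i j \<omega>} = p i j"
  shows "cond_prob M (\<lambda>\<omega>. Zbar Y i1 i2 j1 j2 m \<omega> = 1) (\<lambda>\<omega>. Zbar Y i1 i2 j1 j2 m \<omega> \<in> {-1, 1})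
       = p i1 j1 * (1 - p i1 j2) * (1 - p i2 j1) * p i2 j2 /
         (p i1 j1 * (1 - p i1 j2) * (1 - p i2 j1) * p i2 j2 +
          (1 - p i1 j1) * p i1 j2 * p i2 j1 * (1 - p i2 j2))"
proof -
  have rv: "Y i j \<in> measurable M (count_space UNIV)" if "(i, j) \<in> I" for i j
    using indep that unfolding indep_vars_def by auto
  have "{\<omega>\<in>space M. Zbar Y i1 i2 j1 j2 m \<omega> = c} \<in> events" for c
  proof -
    have "(i1, j1) \<in> I" "(i1, j2) \<in> I" "(i2, j1) \<in> I" "(i2, j2) \<in> I"
      using dyads by auto
    note [measurable] = this[THEN rv]
    show ?thesis unfolding Zbar_def Dind_def by measurable
  qed
  then have "cond_prob M (\<lambda>\<omega>. Zbar Y i1 i2 j1 j2 m \<omega> = 1) (\<lambda>\<omega>. Zbar Y i1 i2 j1 j2 m \<omega> \<in> {-1, 1})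
      = prob {\<omega>\<in>space M. Zbar Y i1 i2 j1 j2 m \<omega> = 1} /
        (prob {\<omega>\<in>space M. Zbar Y i1 i2 j1 j2 m \<omega> = 1} + prob {\<omega>\<in>space M. Zbar Y i1 i2 j1 j2 m \<omega> = -1})"
    by (intro cond_prob_exclusive_alternatives) auto
  then show ?thesis
    using prob_Zbar_eq_plus_minus_1[OF assms] by simp
qed

theorem theorem1:
  fixes N M :: nat
    and X :: "nat \<Rightarrow> nat \<Rightarrow> real ^ 'k"
    and \<beta>0 :: "real ^ 'k"
    and lam del :: "nat \<Rightarrow> nat \<Rightarrow> real"
    and \<Omega> :: "'w measure"
    and Y :: "nat \<Rightarrow> nat \<Rightarrow> 'w \<Rightarrow> nat"
  assumes N4: "N \<ge> 4" and M1: "M \<ge> 1"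
    and ordered: "\<forall>(i,j)\<in>dyads N. \<forall>m m'. 1 \<le> m \<and> m \<le> m' \<and> m' \<le> M \<longrightarrow>
                     lam i m' + del j m' \<ge> lam i m + del j m"
    and P: "prob_space \<Omega>"
    and meas: "\<forall>(i,j)\<in>dyads N. Y i j \<in> measurable \<Omega> (count_space UNIV)"
    and range: "\<forall>(i,j)\<in>dyads N. \<forall>\<omega>\<in>space \<Omega>. Y i j \<omega> \<le> M"
    and indep: "prob_space.indep_vars \<Omega> (\<lambda>_. count_space UNIV) (\<lambda>(i,j). Y i j) (dyads N)"
    and law: "\<forall>(i,j)\<in>dyads N. \<forall>m\<in>{0..M}.
                measure \<Omega> {\<omega>\<in>space \<Omega>. Y i j \<omega> = m} = ologit_prob M (X i j \<bullet> \<beta>0) lam del i j m"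
    and nodes: "i1 \<in> {1..N}" "i2 \<in> {1..N}" "j1 \<in> {1..N}" "j2 \<in> {1..N}"
    and distinct: "distinct [i1, i2, j1, j2]"
    and m: "m \<in> {1..M}"
  shows "cond_prob \<Omega> (\<lambda>\<omega>. Zbar Y i1 i2 j1 j2 m \<omega> = 1)
                      (\<lambda>\<omega>. Zbar Y i1 i2 j1 j2 m \<omega> \<in> {-1, 1})
         = logistic (((X i1 j1 - X i1 j2) - (X i2 j1 - X i2 j2)) \<bullet> \<beta>0)"
proof -
  interpret prob_space \<Omega> by fact
  let ?z = "\<lambda>i j. X i j \<bullet> \<beta>0 - lam i m - del j m"
  have "{(i1, j1), (i1, j2), (i2, j1), (i2, j2)} \<subseteq> dyads N"
    using nodes distinct by (auto simp: dyads_def)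
  moreover have "i1 \<noteq> i2" "j1 \<noteq> j2"
    using distinct by auto
  moreover have "prob {\<omega>\<in>space \<Omega>. m \<le> Y i j \<omega>} = logistic (?z i j)" if "(i, j) \<in> dyads N" for i j
    using meas range law that m by (intro ologit_prob_ge) auto
  ultimately have "cond_prob \<Omega> (\<lambda>\<omega>. Zbar Y i1 i2 j1 j2 m \<omega> = 1) (\<lambda>\<omega>. Zbar Y i1 i2 j1 j2 m \<omega> \<in> {-1, 1})
      = logistic (?z i1 j1) * (1 - logistic (?z i1 j2)) * (1 - logistic (?z i2 j1)) * logistic (?z i2 j2) /
        (logistic (?z i1 j1) * (1 - logistic (?z i1 j2)) * (1 - logistic (?z i2 j1)) * logistic (?z i2 j2) +
         (1 - logistic (?z i1 j1)) * logistic (?z i1 j2) * logistic (?z i2 j1) * (1 - logistic (?z i2 j2)))"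
    by (rule cond_prob_Zbar_eq_1[OF indep])
  also have "\<dots> = logistic (?z i1 j1 - ?z i1 j2 - ?z i2 j1 + ?z i2 j2)"
    by (rule logistic_tetrad)
  also have "?z i1 j1 - ?z i1 j2 - ?z i2 j1 + ?z i2 j2 = ((X i1 j1 - X i1 j2) - (X i2 j1 - X i2 j2)) \<bullet> \<beta>0"
    by (simp add: inner_diff_left)
  finally show ?thesis .
qed

end
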